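(* Let $X$ be a compact metric space, $f_1,f_2:X\to X$ continuous and $F=\{f_1,f_2\}$. If $F$ has the (Hausdorff metric) average shadowing property, then $F^k$ has the average shadowing property for every integer $k>1$.
   Context: Throughout, $(X,d)$ is a compact metric space, $\mathbb{N}=\{0,1,2,\dots\}$, $\mathbb{Z}^+=\{1,2,\dots\}$. $\mathbb{K}(X)$ is the set of nonempty compact subsets of $X$ with the Hausdorff metric $d_H(A,B)=\max\{\sup_{a\in A}\inf_{b\in B}d(a,b),\sup_{b\in B}\inf_{a\in A}d(a,b)\}$; a point $x$ is identified with $\{x\}$. Multiple mappings: $F=\{f_1,f_2\}$ maps $x$ to $F(x)=\{f_1(x),f_2(x)\}$; for $n\ge1$, $F^n(x)=\{f_{i_1}\cdots f_{i_n}(x): i_1,\dots,i_n\in\{1,2\}\}$, $F^0(x)=\{x\}$; for $A\in\mathbb{K}(X)$, $F^n(A)=\bigcup_{a\in A}F^n(a)$. For $k\ge1$, $F^k$ is regarded as the multiple mappings consisting of the $2^k$ maps $f_{i_1}\cdots f_{i_k}$, so $(F^k)^n=F^{kn}$. Average shadowing: for $G=F$ or $G=F^k$, a sequence $\{A_n\}_{n\ge0}\subset\mathbb{K}(X)$ with $A_0$ a singleton is a $\delta$-average-pseudo-orbit of $G$ if there is $N(\delta)>0$ such that for all $n\ge N(\delta)$ and all $m\in\mathbb{Z}^+$, $\frac1n\sum_{i=0}^{n-1}d_H(G(A_{i+m}),A_{i+m+1})<\delta$. $G$ has the average shadowing property if for every $\epsilon>0$ there is $\delta>0$ such that for every $\delta$-average-pseudo-orbit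 $\{A_n\}$ of $G$ there is $y\in X$ with $\limsup_{n\to\infty}\frac1n\sum_{i=0}^{n-1}d_H(G^i(y),A_i)<\epsilon$. *)

theory Defs
  imports "HOL-Analysis.Analysis"
begin

definition hdist :: "'a::metric_space set \<Rightarrow> 'a set \<Rightarrow> real" where
  "hdist A B = max (SUP a\<in>A. infdist a B) (SUP b\<in>B. infdist b A)"

text \<open>A multiple mapping is represented by the set of its constituent maps.
  Its action on a set A is the union of the images.\<close>
definition mm_img :: "('a \<Rightarrow> 'a) set \<Rightarrow> 'a set \<Rightarrow> 'a set" where
  "mm_img G A = (\<Union>g\<in>G. g ` A)"

definition mm_iter :: "('a \<Rightarrow> 'a) set \<Rightarrow> nat \<Rightarrow> 'a set \<Rightarrow> 'a set" where
  "mm_iter G n A = (mm_img G ^^ n) A"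

fun mm_pow :: "('a \<Rightarrow> 'a) set \<Rightarrow> nat \<Rightarrow> ('a \<Rightarrow> 'a) set" where
  "mm_pow G 0 = {id}"
| "mm_pow G (Suc k) = {g \<circ> h | g h. g \<in> G \<and> h \<in> mm_pow G k}"

definition avg_pseudo_orbit :: "'a::metric_space set \<Rightarrow> ('a \<Rightarrow> 'a) set \<Rightarrow> real \<Rightarrow> (nat \<Rightarrow> 'a set) \<Rightarrow> bool" where
  "avg_pseudo_orbit X G \<delta> A \<longleftrightarrow>
     (\<forall>n. A n \<noteq> {} \<and> compact (A n) \<and> A n \<subseteq> X) \<and>
     (\<exists>x. A 0 = {x}) \<and>
     (\<exists>N::nat. N > 0 \<and> (\<forall>n\<ge>N. \<forall>m\<ge>1.
        (1 / real n) * (\<Sum>i<n. hdist (mm_img G (A (i + m))) (A (i + m + 1))) < \<delta>))"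

definition avg_shadowing :: "'a::metric_space set \<Rightarrow> ('a \<Rightarrow> 'a) set \<Rightarrow> bool" where
  "avg_shadowing X G \<longleftrightarrow>
     (\<forall>\<epsilon>>0. \<exists>\<delta>>0. \<forall>A. avg_pseudo_orbit X G \<delta> A \<longrightarrow>
        (\<exists>y\<in>X. limsup (\<lambda>n. ereal ((1 / real n) *
            (\<Sum>i<n. hdist (mm_iter G i {y}) (A i)))) < ereal \<epsilon>))"

end

theory Submission
  imports Defs
begin

(* A (\<delta>/2)-average-pseudo-orbit A of F^k is refined to the sequence B with
   B (p k + j) = F^j (A p) for 0 \<le> j < k.  Inside a block B is an exact orbit of F, and at
   the end of block p the error of B is the error d_H (F^k (A p), A (p + 1)) of A.  So every
   averaging window of B sees at most as much error as a window of A of the same length,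
   plus possibly the error d_H (F^k (A 0), A 1), which the pseudo-orbit condition (windows
   start at m \<ge> 1) does not control but which is bounded by diam X; for long windows this
   is negligible and B is a \<delta>-average-pseudo-orbit of F.  A point y whose orbit
   \<epsilon>/(2k)-shadows B on average shadows A under F^k, because (F^k)^i (y) = F^(k i) (y),
   B (k i) = A i, and an average over the multiples of k is at most k times the average
   over all times. *)

lemma mm_iter_0 [simp]: "mm_iter G 0 A = A"
  by (simp add: mm_iter_def)

lemma mm_iter_Suc [simp]: "mm_iter G (Suc n) A = mm_img G (mm_iter G n A)"
  by (simp add: mm_iter_def)

lemma mm_iter_add: "mm_iter G (m + n) A = mm_iter G m (mm_iter G n A)"
  by (simp add: mm_iter_def funpow_add)

lemma mm_img_mm_pow: "mm_img (mm_pow G k) A = mm_iter G k A"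
proof (induction k arbitrary: A)
  case 0
  show ?case by (simp add: mm_img_def)
next
  case (Suc k)
  have "mm_img (mm_pow G (Suc k)) A = mm_img G (mm_img (mm_pow G k) A)"
    unfolding mm_img_def by (intro equalityI) force+
  with Suc show ?case by simp
qed

lemma mm_iter_mm_pow: "mm_iter (mm_pow G k) n A = mm_iter G (k * n) A"
  by (induction n) (simp_all add: mm_img_mm_pow mm_iter_add)

lemma infdist_le_diameter:
  assumes "bounded X" "a \<in> X" "B \<subseteq> X" "B \<noteq> {}"
  shows "infdist a B \<le> diameter X"
proof -
  obtain b where "b \<in> B" using assms(4) by blast
  then have "infdist a B \<le> dist a b" by (rule infdist_le)
  also have "\<dots> \<le> diameter X"
    using diameter_bounded_bound[OF assms(1)] assms(2,3) \<open>b \<in> B\<close> by blast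
  finally show ?thesis .
qed

lemma hdist_le_diameter:
  assumes "bounded X" "P \<subseteq> X" "Q \<subseteq> X" "P \<noteq> {}" "Q \<noteq> {}"
  shows "hdist P Q \<le> diameter X"
  unfolding hdist_def using assms infdist_le_diameter[OF assms(1)]
  by (auto intro!: cSUP_least)

lemma hdist_nonneg:
  assumes "bounded X" "P \<subseteq> X" "Q \<subseteq> X" "P \<noteq> {}" "Q \<noteq> {}"
  shows "0 \<le> hdist P Q"
proof -
  obtain a where "a \<in> P" using assms(4) by blast
  have "bdd_above ((\<lambda>a. infdist a Q) ` P)"
    using assms infdist_le_diameter[OF assms(1)] by (intro bdd_aboveI2) auto
  with \<open>a \<in> P\<close> have "infdist a Q \<le> (SUP a\<in>P. infdist a Q)" by (rule cSUP_upper)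
  then show ?thesis
    unfolding hdist_def by (metis infdist_nonneg max.coboundedI1 order.trans)
qed

lemma hdist_self: "P \<noteq> {} \<Longrightarrow> hdist P P = 0"
  by (simp add: hdist_def)

definition spread :: "nat \<Rightarrow> (nat \<Rightarrow> real) \<Rightarrow> nat \<Rightarrow> real" where
  "spread k c t = (if t mod k = k - 1 then c (t div k) else 0)"

lemma add_div_le_div_add: "(m + d) div k \<le> m div k + (d::nat)"
  by (induction d) (auto simp: div_Suc)

lemma sum_spread_window_le:
  fixes c :: "nat \<Rightarrow> real"
  assumes "k > 0" and c_nonneg: "\<And>p. 0 \<le> c p"
  shows "(\<Sum>i<n. spread k c (i + m)) \<le> c 0 + (\<Sum>i<n. c (i + max (m div k) 1))"
proof -
  define q where "q = max (m div k) 1"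
  define T where "T = {t \<in> {m..<m + n}. t mod k = k - 1}"
  have "(\<Sum>i<n. spread k c (i + m)) = (\<Sum>t\<in>{m..<m + n}. spread k c t)"
    using sum.shift_bounds_nat_ivl[of "spread k c" 0 m n] by (simp add: atLeast0LessThan add.commute)
  also have "\<dots> = (\<Sum>t\<in>T. c (t div k))"
    unfolding T_def spread_def by (rule sum.inter_filter[symmetric]) simp
  also have "\<dots> = (\<Sum>p\<in>(\<lambda>t. t div k) ` T. c p)"
  proof (rule sum.reindex[symmetric, unfolded comp_def])
    show "inj_on (\<lambda>t. t div k) T"
      unfolding T_def by (rule inj_onI) (metis (mono_tags, lifting) div_mult_mod_eq mem_Collect_eq)
  qed
  also have "\<dots> \<le> (\<Sum>p\<in>insert 0 {q..<q + n}. c p)"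
  proof (rule sum_mono2)
    have "m div k \<le> t div k \<and> t div k < m div k + n" if "t \<in> T" for t
      using that add_div_le_div_add[of m "t - m" k] div_le_mono[of m t k] unfolding T_def by auto
    then show "(\<lambda>t. t div k) ` T \<subseteq> insert 0 {q..<q + n}"
      unfolding q_def by fastforce
  qed (use c_nonneg in auto)
  also have "\<dots> = c 0 + (\<Sum>i<n. c (i + q))"
    using sum.shift_bounds_nat_ivl[of c 0 q n] by (simp add: q_def atLeast0LessThan add.commute)
  finally show ?thesis unfolding q_def .
qed

lemma spread_window_avg_less:
  fixes c :: "nat \<Rightarrow> real"
  assumes "k > 0" "\<delta> > 0" and c_bounds: "\<And>p. 0 \<le> c p" "\<And>p. c p \<le> D"
    and c_avg: "\<And>n m. N \<le> n \<Longrightarrow> 1 \<le> m \<Longrightarrow> 1 / real n * (\<Sum>i<n. c (i + m)) < \<delta> / 2"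
  shows "\<exists>N'>0. \<forall>n\<ge>N'. \<forall>m\<ge>1. 1 / real n * (\<Sum>i<n. spread k c (i + m)) < \<delta>"
proof -
  define N' where "N' = N + nat \<lceil>2 * D / \<delta>\<rceil> + 1"
  have "1 / real n * (\<Sum>i<n. spread k c (i + m)) < \<delta>" if "N' \<le> n" "1 \<le> m" for n m
  proof -
    let ?q = "max (m div k) 1"
    have n: "real n > 0" "N \<le> n" using that(1) unfolding N'_def by auto
    have "real n > 2 * D / \<delta>" using that(1) unfolding N'_def by linarith
    then have D: "2 * D < real n * \<delta>" using \<open>\<delta> > 0\<close> by (simp add: field_simps)
    have "(\<Sum>i<n. c (i + ?q)) < real n * \<delta> / 2"
      using c_avg[of n ?q] n by (simp add: field_simps)
    moreover have "(\<Sum>i<n. spread k c (i + m)) \<le> c 0 + (\<Sum>i<n. c (i + ?q))"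
      using \<open>k > 0\<close> c_bounds(1) by (rule sum_spread_window_le)
    ultimately have "(\<Sum>i<n. spread k c (i + m)) < real n * \<delta>"
      using c_bounds(2)[of 0] D by linarith
    then show ?thesis using n by (simp add: field_simps)
  qed
  then show ?thesis by (intro exI[of _ N']) (auto simp: N'_def)
qed

lemma limsup_avg_multiples_le:
  fixes h :: "nat \<Rightarrow> real"
  assumes "k > 0" and h_nonneg: "\<And>t. 0 \<le> h t"
    and "limsup (\<lambda>n. ereal (1 / real n * (\<Sum>t<n. h t))) < ereal e"
  shows "limsup (\<lambda>n. ereal (1 / real n * (\<Sum>i<n. h (k * i)))) \<le> ereal (real k * e)"
proof (rule Limsup_bounded)
  obtain N where N: "\<And>n. N \<le> n \<Longrightarrow> 1 / real n * (\<Sum>t<n. h t) < e"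
    using Limsup_lessD[OF assms(3)] unfolding eventually_sequentially by auto
  have "1 / real n * (\<Sum>i<n. h (k * i)) \<le> real k * e" if "N + 1 \<le> n" for n
  proof -
    have kn: "N \<le> k * n" "real (k * n) > 0"
      using that \<open>k > 0\<close> by (auto intro: le_trans[OF _ mult_le_mono1[of 1 k n]])
    have "(\<Sum>i<n. h (k * i)) = sum h ((*) k ` {..<n})"
      using \<open>k > 0\<close> by (simp add: sum.reindex inj_on_def)
    also have "\<dots> \<le> sum h {..<k * n}"
      using h_nonneg \<open>k > 0\<close> by (intro sum_mono2) auto
    also have "\<dots> < e * real (k * n)"
      using N[OF kn(1)] kn(2) by (simp add: field_simps)
    finally show ?thesis using that by (simp add: field_simps)
  qed
  then show "\<forall>\<^sub>F n in sequentially. ereal (1 / real n * (\<Sum>i<n. h (k * i))) \<le> ereal (real k * e)"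
    unfolding eventually_sequentially by auto
qed

definition mm_interpolate :: "('a \<Rightarrow> 'a) set \<Rightarrow> nat \<Rightarrow> (nat \<Rightarrow> 'a set) \<Rightarrow> nat \<Rightarrow> 'a set" where
  "mm_interpolate G k A t = mm_iter G (t mod k) (A (t div k))"

lemma hdist_mm_interpolate_step:
  assumes "k > 0" "mm_interpolate G k A (t + 1) \<noteq> {}"
  shows "hdist (mm_img G (mm_interpolate G k A t)) (mm_interpolate G k A (t + 1))
    = spread k (\<lambda>p. hdist (mm_img (mm_pow G k) (A p)) (A (p + 1))) t"
proof (cases "t mod k = k - 1")
  case True
  then have "Suc (t mod k) = k" using \<open>k > 0\<close> by simp
  then have "Suc t mod k = 0" "Suc t div k = t div k + 1" by (simp_all add: mod_Suc div_Suc)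
  moreover have "mm_img G (mm_iter G (k - 1) B) = mm_img (mm_pow G k) B" for B
    using \<open>k > 0\<close> by (simp add: mm_img_mm_pow flip: mm_iter_Suc)
  ultimately show ?thesis using True by (simp add: mm_interpolate_def spread_def)
next
  case False
  then have "Suc (t mod k) \<noteq> k" by linarith
  then have "Suc t mod k = Suc (t mod k)" "Suc t div k = t div k" by (simp_all add: mod_Suc div_Suc)
  with False assms(2) show ?thesis by (simp add: mm_interpolate_def spread_def hdist_self)
qed

locale multiple_mapping =
  fixes X :: "'a::metric_space set" and G :: "('a \<Rightarrow> 'a) set"
  assumes bounded_X: "bounded X"
    and finite_G: "finite G" and G_nonempty: "G \<noteq> {}"
    and continuous_maps: "\<And>g. g \<in> G \<Longrightarrow> continuous_on X g"
    and maps_into: "\<And>g. g \<in> G \<Longrightarrow> g ` X \<subseteq> X"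
begin

lemma mm_iter_nonempty_compact_subset:
  assumes "C \<noteq> {}" "compact C" "C \<subseteq> X"
  shows "mm_iter G n C \<noteq> {} \<and> compact (mm_iter G n C) \<and> mm_iter G n C \<subseteq> X"
proof (induction n)
  case 0
  with assms show ?case by simp
next
  case (Suc n)
  have "compact (g ` mm_iter G n C)" if "g \<in> G" for g
    using Suc continuous_on_subset[OF continuous_maps[OF that]] compact_continuous_image by blast
  moreover have "g ` mm_iter G n C \<subseteq> X" if "g \<in> G" for g
    using Suc maps_into[OF that] by blast
  ultimately show ?case
    using Suc finite_G G_nonempty unfolding mm_iter_Suc mm_img_def by (auto intro!: compact_UN)
qed

lemma avg_pseudo_orbit_interpolate:
  assumes "k > 0" "\<delta> > 0" "avg_pseudo_orbit X (mm_pow G k) (\<delta> / 2) A"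
  shows "avg_pseudo_orbit X G \<delta> (mm_interpolate G k A)"
proof -
  define c where "c = (\<lambda>p. hdist (mm_img (mm_pow G k) (A p)) (A (p + 1)))"
  have A: "A p \<noteq> {} \<and> compact (A p) \<and> A p \<subseteq> X" for p
    using assms(3) unfolding avg_pseudo_orbit_def by blast
  obtain N where c_avg: "\<And>n m. N \<le> n \<Longrightarrow> 1 \<le> m \<Longrightarrow> 1 / real n * (\<Sum>i<n. c (i + m)) < \<delta> / 2"
    using assms(3) unfolding avg_pseudo_orbit_def c_def by blast
  let ?B = "mm_interpolate G k A"
  have B: "?B t \<noteq> {} \<and> compact (?B t) \<and> ?B t \<subseteq> X" for t
    unfolding mm_interpolate_def using A by (intro mm_iter_nonempty_compact_subset) auto
  have "0 \<le> c p \<and> c p \<le> diameter X" for p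
  proof -
    have "mm_iter G k (A p) \<noteq> {} \<and> compact (mm_iter G k (A p)) \<and> mm_iter G k (A p) \<subseteq> X"
      using A[of p] by (intro mm_iter_nonempty_compact_subset) auto
    with A[of "p + 1"] show ?thesis
      unfolding c_def mm_img_mm_pow
      by (auto intro: hdist_nonneg[OF bounded_X] hdist_le_diameter[OF bounded_X])
  qed
  then obtain N' where "N' > 0"
    and N': "\<forall>n\<ge>N'. \<forall>m\<ge>1. 1 / real n * (\<Sum>i<n. spread k c (i + m)) < \<delta>"
    using spread_window_avg_less[OF assms(1,2) _ _ c_avg] by blast
  have step: "hdist (mm_img G (?B t)) (?B (t + 1)) = spread k c t" for t
    unfolding c_def by (rule hdist_mm_interpolate_step[OF assms(1)]) (use B in blast)
  show ?thesis
    unfolding avg_pseudo_orbit_def step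
  proof (intro conjI)
    show "\<forall>t. ?B t \<noteq> {} \<and> compact (?B t) \<and> ?B t \<subseteq> X"
      using B by blast
    show "\<exists>x. ?B 0 = {x}"
      using assms(3) by (simp add: avg_pseudo_orbit_def mm_interpolate_def)
  qed (use \<open>N' > 0\<close> N' in blast)
qed

lemma limsup_avg_mm_pow_le:
  assumes "k > 0" "y \<in> X"
    and B: "\<And>t. mm_interpolate G k A t \<noteq> {} \<and> mm_interpolate G k A t \<subseteq> X"
    and shadow: "limsup (\<lambda>n. ereal (1 / real n *
      (\<Sum>i<n. hdist (mm_iter G i {y}) (mm_interpolate G k A i)))) < ereal e"
  shows "limsup (\<lambda>n. ereal (1 / real n *
      (\<Sum>i<n. hdist (mm_iter (mm_pow G k) i {y}) (A i)))) \<le> ereal (real k * e)"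
proof -
  have nonneg: "0 \<le> hdist (mm_iter G t {y}) (mm_interpolate G k A t)" for t
  proof -
    have "mm_iter G t {y} \<noteq> {} \<and> mm_iter G t {y} \<subseteq> X"
      using \<open>y \<in> X\<close> mm_iter_nonempty_compact_subset[of "{y}" t] by auto
    with B show ?thesis by (simp add: hdist_nonneg[OF bounded_X])
  qed
  have multiple: "hdist (mm_iter (mm_pow G k) i {y}) (A i)
      = hdist (mm_iter G (k * i) {y}) (mm_interpolate G k A (k * i))" for i
    using \<open>k > 0\<close> by (simp add: mm_iter_mm_pow mm_interpolate_def)
  show ?thesis
    unfolding multiple by (rule limsup_avg_multiples_le[OF \<open>k > 0\<close> nonneg shadow])
qed

theorem avg_shadowing_mm_pow:
  assumes "avg_shadowing X G" "k > 0"
  shows "avg_shadowing X (mm_pow G k)"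
  unfolding avg_shadowing_def
proof (intro allI impI)
  fix \<epsilon> :: real assume "\<epsilon> > 0"
  with \<open>k > 0\<close> have "\<epsilon> / (2 * real k) > 0" by simp
  then obtain \<delta> where "\<delta> > 0" and shadow: "\<And>B. avg_pseudo_orbit X G \<delta> B \<Longrightarrow> \<exists>y\<in>X.
      limsup (\<lambda>n. ereal (1 / real n * (\<Sum>i<n. hdist (mm_iter G i {y}) (B i)))) < ereal (\<epsilon> / (2 * real k))"
    using assms(1) unfolding avg_shadowing_def by blast
  have "\<exists>y\<in>X. limsup (\<lambda>n. ereal (1 / real n *
      (\<Sum>i<n. hdist (mm_iter (mm_pow G k) i {y}) (A i)))) < ereal \<epsilon>"
    if "avg_pseudo_orbit X (mm_pow G k) (\<delta> / 2) A" for A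
  proof -
    have B: "avg_pseudo_orbit X G \<delta> (mm_interpolate G k A)"
      using \<open>k > 0\<close> \<open>\<delta> > 0\<close> that by (rule avg_pseudo_orbit_interpolate)
    then obtain y where "y \<in> X" and y: "limsup (\<lambda>n. ereal (1 / real n *
        (\<Sum>i<n. hdist (mm_iter G i {y}) (mm_interpolate G k A i)))) < ereal (\<epsilon> / (2 * real k))"
      using shadow by blast
    have "mm_interpolate G k A t \<noteq> {} \<and> mm_interpolate G k A t \<subseteq> X" for t
      using B unfolding avg_pseudo_orbit_def by blast
    from limsup_avg_mm_pow_le[OF \<open>k > 0\<close> \<open>y \<in> X\<close> this y]
    have "limsup (\<lambda>n. ereal (1 / real n * (\<Sum>i<n. hdist (mm_iter (mm_pow G k) i {y}) (A i))))
        \<le> ereal (real k * (\<epsilon> / (2 * real k)))" .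
    also have "\<dots> < ereal \<epsilon>" using \<open>k > 0\<close> \<open>\<epsilon> > 0\<close> by simp
    finally show ?thesis using \<open>y \<in> X\<close> by blast
  qed
  with \<open>\<delta> > 0\<close> show "\<exists>\<delta>>0. \<forall>A. avg_pseudo_orbit X (mm_pow G k) \<delta> A \<longrightarrow> (\<exists>y\<in>X.
      limsup (\<lambda>n. ereal (1 / real n * (\<Sum>i<n. hdist (mm_iter (mm_pow G k) i {y}) (A i)))) < ereal \<epsilon>)"
    by (intro exI[of _ "\<delta> / 2"] conjI) simp_all
qed

end

theorem theorem4p2:
  fixes X :: "'a::metric_space set" and f1 f2 :: "'a \<Rightarrow> 'a"
  assumes "compact X"
    and "continuous_on X f1" and "f1 ` X \<subseteq> X"
    and "continuous_on X f2" and "f2 ` X \<subseteq> X"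
    and "avg_shadowing X {f1, f2}"
  shows "\<forall>k::nat. k > 1 \<longrightarrow> avg_shadowing X (mm_pow {f1, f2} k)"
proof -
  interpret multiple_mapping X "{f1, f2}"
    using assms(1-5) by unfold_locales (auto intro: compact_imp_bounded)
  show ?thesis using assms(6) by (auto intro: avg_shadowing_mm_pow)
qed

end
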